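(* Let $R$ be a countable ring, let $B$ be a countable index set, and let $(M_\alpha)_{\alpha\in B}$ be any family of unitary left $R$-modules. Then the left $R$-module $$\prod_{\alpha\in B}M_\alpha\Big/\bigoplus_{\alpha\in B}M_\alpha$$ is algebraically compact.
   Context: All modules are unitary left $R$-modules. For a cardinal $\kappa$, a module $M$ is $\kappa$-compact if every system of at most $\kappa$ linear equations $\sum_{j\in J} r_{ij}x_j = m_i$ ($i\in I$, $r_{ij}\in R$, for each $i$ almost all $r_{ij}=0$, $m_i\in M$, $|I|,|J|\le\kappa$) has a solution in $M$ whenever every finite subsystem has a solution in $M$. $M$ is algebraically compact if it is $\kappa$-compact for every cardinal $\kappa$ (equivalently, $M$ is pure injective). *)

theory Defs
  imports "HOL-Algebra.Module" "HOL-Algebra.AbelCoset" "HOL-Library.Countable_Set"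
begin

text \<open>The HOL-Algebra locale module requires a commutative ring, so we define left modules
  directly, reusing the HOL-Algebra module record (its mult/one fields are ignored).\<close>

definition left_module :: "'r ring \<Rightarrow> ('r, 'm) module \<Rightarrow> bool" where
  "left_module R M \<longleftrightarrow> ring R \<and> abelian_group M \<and>
     (\<forall>a\<in>carrier R. \<forall>x\<in>carrier M. a \<odot>\<^bsub>M\<^esub> x \<in> carrier M) \<and>
     (\<forall>a\<in>carrier R. \<forall>b\<in>carrier R. \<forall>x\<in>carrier M.
        (a \<oplus>\<^bsub>R\<^esub> b) \<odot>\<^bsub>M\<^esub> x = (a \<odot>\<^bsub>M\<^esub> x) \<oplus>\<^bsub>M\<^esub> (b \<odot>\<^bsub>M\<^esub> x)) \<and>
     (\<forall>a\<in>carrier R. \<forall>x\<in>carrier M. \<forall>y\<in>carrier M.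
        a \<odot>\<^bsub>M\<^esub> (x \<oplus>\<^bsub>M\<^esub> y) = (a \<odot>\<^bsub>M\<^esub> x) \<oplus>\<^bsub>M\<^esub> (a \<odot>\<^bsub>M\<^esub> y)) \<and>
     (\<forall>a\<in>carrier R. \<forall>b\<in>carrier R. \<forall>x\<in>carrier M.
        (a \<otimes>\<^bsub>R\<^esub> b) \<odot>\<^bsub>M\<^esub> x = a \<odot>\<^bsub>M\<^esub> (b \<odot>\<^bsub>M\<^esub> x)) \<and>
     (\<forall>x\<in>carrier M. \<one>\<^bsub>R\<^esub> \<odot>\<^bsub>M\<^esub> x = x)"

definition prod_module :: "'b set \<Rightarrow> ('b \<Rightarrow> ('r, 'm) module) \<Rightarrow> ('r, 'b \<Rightarrow> 'm) module" where
  "prod_module B M =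
     \<lparr> carrier = (\<Pi>\<^sub>E a\<in>B. carrier (M a)),
       monoid.mult = undefined, one = undefined,
       zero = (\<lambda>a\<in>B. \<zero>\<^bsub>M a\<^esub>),
       add = (\<lambda>f g. \<lambda>a\<in>B. f a \<oplus>\<^bsub>M a\<^esub> g a),
       smult = (\<lambda>r f. \<lambda>a\<in>B. r \<odot>\<^bsub>M a\<^esub> f a) \<rparr>"

definition dsum_carrier :: "'b set \<Rightarrow> ('b \<Rightarrow> ('r, 'm) module) \<Rightarrow> ('b \<Rightarrow> 'm) set" where
  "dsum_carrier B M =
     {f \<in> carrier (prod_module B M). finite {a \<in> B. f a \<noteq> \<zero>\<^bsub>M a\<^esub>}}"

definition quot_module :: "('r, 'm) module \<Rightarrow> 'm set \<Rightarrow> ('r, 'm set) module" where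
  "quot_module M N =
     \<lparr> carrier = a_rcosets\<^bsub>M\<^esub> N,
       monoid.mult = undefined, one = undefined,
       zero = N,
       add = set_add M,
       smult = (\<lambda>r X. \<Union>x\<in>X. N +>\<^bsub>M\<^esub> (r \<odot>\<^bsub>M\<^esub> x)) \<rparr>"

definition lin_comb :: "'r ring \<Rightarrow> ('r, 'm) module \<Rightarrow> ('i \<Rightarrow> 'j \<Rightarrow> 'r) \<Rightarrow> ('j \<Rightarrow> 'm)
    \<Rightarrow> 'i \<Rightarrow> 'j set \<Rightarrow> 'm" where
  "lin_comb R M r x i J = finsum M (\<lambda>j. r i j \<odot>\<^bsub>M\<^esub> x j) {j \<in> J. r i j \<noteq> \<zero>\<^bsub>R\<^esub>}"

definition row_finite_system :: "'r ring \<Rightarrow> 'i set \<Rightarrow> 'j set \<Rightarrow> ('i \<Rightarrow> 'j \<Rightarrow> 'r) \<Rightarrow> bool" where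
  "row_finite_system R I J r \<longleftrightarrow>
     (\<forall>i\<in>I. \<forall>j\<in>J. r i j \<in> carrier R) \<and> (\<forall>i\<in>I. finite {j \<in> J. r i j \<noteq> \<zero>\<^bsub>R\<^esub>})"

definition sys_solvable :: "'r ring \<Rightarrow> ('r, 'm) module \<Rightarrow> 'i set \<Rightarrow> 'j set
    \<Rightarrow> ('i \<Rightarrow> 'j \<Rightarrow> 'r) \<Rightarrow> ('i \<Rightarrow> 'm) \<Rightarrow> bool" where
  "sys_solvable R M I J r m \<longleftrightarrow>
     (\<exists>x. (\<forall>j\<in>J. x j \<in> carrier M) \<and> (\<forall>i\<in>I. lin_comb R M r x i J = m i))"

text \<open>M is kappa-compact iff this holds for all
  I, J of cardinality at most kappa; M is algebraically compact iff it holds for all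
  index sets I, J (of arbitrary types).\<close>

definition compact_for :: "'r ring \<Rightarrow> ('r, 'm) module \<Rightarrow> 'i set \<Rightarrow> 'j set \<Rightarrow> bool" where
  "compact_for R M I J \<longleftrightarrow>
     (\<forall>r m. row_finite_system R I J r \<and> (\<forall>i\<in>I. m i \<in> carrier M) \<and>
        (\<forall>I0. finite I0 \<and> I0 \<subseteq> I \<longrightarrow> sys_solvable R M I0 J r m)
        \<longrightarrow> sys_solvable R M I J r m)"

end

theory Submission
  imports Defs
begin

text \<open>Elements of the quotient are represented by elements of the product, two representatives
  being equal in the quotient iff they differ in only finitely many coordinates. A system over the
  quotient thus becomes a system over the product that only needs to hold up to finitely many
  coordinates (an almost solution).

  For countably many equations, enumerate them and glue almost solutions of the finite initial
  segments coordinatewise along a diagonal; this uses that \<open>B\<close> is countable. For arbitrary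
  systems, Zorn's lemma gives a maximal partial assignment of the unknowns under which every
  finite subsystem stays almost solvable, and it remains to assign one more unknown \<open>j0\<close>. The
  values at \<open>j0\<close> of almost solutions of a homogeneous finite subsystem that vanish on the assigned
  unknowns depend only on its row pattern, the list of its coefficient rows on the remaining
  unknowns. As \<open>R\<close> is countable there are only countably many row patterns, so a countable
  subsystem realises all of them, and the value at \<open>j0\<close> of an almost solution of that countable
  subsystem works for every finite one.\<close>

lemma left_module_abelian_group: "left_module R N \<Longrightarrow> abelian_group N"
  by (simp add: left_module_def)

lemma left_module_smult_closed:
  "left_module R N \<Longrightarrow> a \<in> carrier R \<Longrightarrow> x \<in> carrier N \<Longrightarrow> a \<odot>\<^bsub>N\<^esub> x \<in> carrier N"
  by (simp add: left_module_def)

lemma left_module_smult_zero: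
  assumes "left_module R N" "a \<in> carrier R"
  shows "a \<odot>\<^bsub>N\<^esub> \<zero>\<^bsub>N\<^esub> = \<zero>\<^bsub>N\<^esub>"
proof -
  interpret abelian_group N using assms(1) by (rule left_module_abelian_group)
  have "a \<odot>\<^bsub>N\<^esub> (\<zero>\<^bsub>N\<^esub> \<oplus>\<^bsub>N\<^esub> \<zero>\<^bsub>N\<^esub>) = a \<odot>\<^bsub>N\<^esub> \<zero>\<^bsub>N\<^esub> \<oplus>\<^bsub>N\<^esub> a \<odot>\<^bsub>N\<^esub> \<zero>\<^bsub>N\<^esub>"
    using assms unfolding left_module_def by blast
  then show ?thesis
    using left_module_smult_closed[OF assms zero_closed] by simp
qed

lemma left_module_zero_smult:
  assumes "left_module R N" "x \<in> carrier N"
  shows "\<zero>\<^bsub>R\<^esub> \<odot>\<^bsub>N\<^esub> x = \<zero>\<^bsub>N\<^esub>"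
proof -
  interpret abelian_group N using assms(1) by (rule left_module_abelian_group)
  interpret R: ring R using assms(1) by (simp add: left_module_def)
  have "(\<zero>\<^bsub>R\<^esub> \<oplus>\<^bsub>R\<^esub> \<zero>\<^bsub>R\<^esub>) \<odot>\<^bsub>N\<^esub> x = \<zero>\<^bsub>R\<^esub> \<odot>\<^bsub>N\<^esub> x \<oplus>\<^bsub>N\<^esub> \<zero>\<^bsub>R\<^esub> \<odot>\<^bsub>N\<^esub> x"
    using assms unfolding left_module_def by blast
  then show ?thesis
    using left_module_smult_closed[OF assms(1) R.zero_closed assms(2)] by simp
qed

lemma left_module_finsum_smult_add:
  assumes "left_module R N" "c \<in> F \<rightarrow> carrier R" "x \<in> F \<rightarrow> carrier N" "y \<in> F \<rightarrow> carrier N"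
  shows "finsum N (\<lambda>j. c j \<odot>\<^bsub>N\<^esub> (x j \<oplus>\<^bsub>N\<^esub> y j)) F
     = finsum N (\<lambda>j. c j \<odot>\<^bsub>N\<^esub> x j) F \<oplus>\<^bsub>N\<^esub> finsum N (\<lambda>j. c j \<odot>\<^bsub>N\<^esub> y j) F"
proof -
  interpret abelian_group N using assms(1) by (rule left_module_abelian_group)
  have "finsum N (\<lambda>j. c j \<odot>\<^bsub>N\<^esub> (x j \<oplus>\<^bsub>N\<^esub> y j)) F
      = finsum N (\<lambda>j. c j \<odot>\<^bsub>N\<^esub> x j \<oplus>\<^bsub>N\<^esub> c j \<odot>\<^bsub>N\<^esub> y j) F"
    using assms by (intro finsum_cong') (auto simp: left_module_def Pi_def)
  also have "\<dots> = finsum N (\<lambda>j. c j \<odot>\<^bsub>N\<^esub> x j) F \<oplus>\<^bsub>N\<^esub> finsum N (\<lambda>j. c j \<odot>\<^bsub>N\<^esub> y j) F"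
    using assms by (intro finsum_addf) (auto simp: left_module_smult_closed Pi_def)
  finally show ?thesis .
qed

lemma (in abelian_group) minus_add_cancel: "x \<in> carrier G \<Longrightarrow> y \<in> carrier G \<Longrightarrow> (x \<ominus> y) \<oplus> y = x"
  by (simp add: a_minus_def a_assoc l_neg)

section \<open>The product modulo the direct sum\<close>

locale module_family =
  fixes R :: "'r ring" and B :: "'b set" and M :: "'b \<Rightarrow> ('r, 'm) module"
  assumes left_module: "\<forall>a\<in>B. left_module R (M a)"
begin

abbreviation "P \<equiv> prod_module B M"
abbreviation "S \<equiv> dsum_carrier B M"
abbreviation "Q \<equiv> quot_module P S"

lemma left_module_at: "a \<in> B \<Longrightarrow> left_module R (M a)"
  using left_module by blast

lemma abelian_group: "a \<in> B \<Longrightarrow> abelian_group (M a)"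
  by (rule left_module_abelian_group[OF left_module_at])

lemma abelian_monoid: "a \<in> B \<Longrightarrow> abelian_monoid (M a)"
  by (simp add: abelian_group.axioms(1)[OF abelian_group])

lemma zero_closed [simp]: "a \<in> B \<Longrightarrow> \<zero>\<^bsub>M a\<^esub> \<in> carrier (M a)"
  by (simp add: abelian_groupE(2)[OF abelian_group])

lemma add_closed [simp]:
  "a \<in> B \<Longrightarrow> x \<in> carrier (M a) \<Longrightarrow> y \<in> carrier (M a) \<Longrightarrow> x \<oplus>\<^bsub>M a\<^esub> y \<in> carrier (M a)"
  by (simp add: abelian_groupE(1)[OF abelian_group])

lemma minus_closed [simp]:
  "a \<in> B \<Longrightarrow> x \<in> carrier (M a) \<Longrightarrow> y \<in> carrier (M a) \<Longrightarrow> x \<ominus>\<^bsub>M a\<^esub> y \<in> carrier (M a)"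
  by (simp add: abelian_group.minus_closed[OF abelian_group])

lemma smult_closed [simp]:
  "a \<in> B \<Longrightarrow> c \<in> carrier R \<Longrightarrow> x \<in> carrier (M a) \<Longrightarrow> c \<odot>\<^bsub>M a\<^esub> x \<in> carrier (M a)"
  by (rule left_module_smult_closed[OF left_module_at])

lemma add_assoc:
  "a \<in> B \<Longrightarrow> x \<in> carrier (M a) \<Longrightarrow> y \<in> carrier (M a) \<Longrightarrow> z \<in> carrier (M a) \<Longrightarrow>
   (x \<oplus>\<^bsub>M a\<^esub> y) \<oplus>\<^bsub>M a\<^esub> z = x \<oplus>\<^bsub>M a\<^esub> (y \<oplus>\<^bsub>M a\<^esub> z)"
  by (simp add: abelian_groupE(3)[OF abelian_group])

lemma add_comm:
  "a \<in> B \<Longrightarrow> x \<in> carrier (M a) \<Longrightarrow> y \<in> carrier (M a) \<Longrightarrow> x \<oplus>\<^bsub>M a\<^esub> y = y \<oplus>\<^bsub>M a\<^esub> x"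
  by (simp add: abelian_groupE(4)[OF abelian_group])

lemma zero_add [simp]: "a \<in> B \<Longrightarrow> x \<in> carrier (M a) \<Longrightarrow> \<zero>\<^bsub>M a\<^esub> \<oplus>\<^bsub>M a\<^esub> x = x"
  by (simp add: abelian_groupE(5)[OF abelian_group])

lemma add_zero [simp]: "a \<in> B \<Longrightarrow> x \<in> carrier (M a) \<Longrightarrow> x \<oplus>\<^bsub>M a\<^esub> \<zero>\<^bsub>M a\<^esub> = x"
  by (simp add: abelian_monoid.r_zero[OF abelian_monoid])

lemma minus_add_cancel [simp]:
  "a \<in> B \<Longrightarrow> x \<in> carrier (M a) \<Longrightarrow> y \<in> carrier (M a) \<Longrightarrow> (x \<ominus>\<^bsub>M a\<^esub> y) \<oplus>\<^bsub>M a\<^esub> y = x"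
  by (simp add: abelian_group.minus_add_cancel[OF abelian_group])

lemma add_minus_cancel [simp]:
  assumes "a \<in> B" "x \<in> carrier (M a)" "y \<in> carrier (M a)"
  shows "(x \<oplus>\<^bsub>M a\<^esub> y) \<ominus>\<^bsub>M a\<^esub> y = x"
proof -
  interpret abelian_group "M a" by (rule abelian_group[OF assms(1)])
  show ?thesis using assms by (simp add: a_minus_def a_assoc r_neg)
qed

lemma add_minus_cancel' [simp]:
  "a \<in> B \<Longrightarrow> x \<in> carrier (M a) \<Longrightarrow> y \<in> carrier (M a) \<Longrightarrow> x \<oplus>\<^bsub>M a\<^esub> (y \<ominus>\<^bsub>M a\<^esub> x) = y"
  by (subst add_comm) simp_all

lemma minus_self [simp]: "a \<in> B \<Longrightarrow> x \<in> carrier (M a) \<Longrightarrow> x \<ominus>\<^bsub>M a\<^esub> x = \<zero>\<^bsub>M a\<^esub>"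
  by (simp add: a_minus_def abelian_group.r_neg[OF abelian_group])

lemma add_right_eq_self:
  assumes "a \<in> B" "x \<in> carrier (M a)" "y \<in> carrier (M a)"
  shows "x \<oplus>\<^bsub>M a\<^esub> y = x \<longleftrightarrow> y = \<zero>\<^bsub>M a\<^esub>"
proof -
  interpret abelian_group "M a" by (rule abelian_group[OF assms(1)])
  show ?thesis using assms by simp
qed

lemma carrier_prod: "carrier P = (\<Pi>\<^sub>E a\<in>B. carrier (M a))"
  by (simp add: prod_module_def)

lemma mem_carrier_prod: "x \<in> carrier P \<longleftrightarrow> (\<forall>a\<in>B. x a \<in> carrier (M a)) \<and> x \<in> extensional B"
  by (simp add: carrier_prod PiE_iff)

lemma zero_prod: "\<zero>\<^bsub>P\<^esub> = (\<lambda>a\<in>B. \<zero>\<^bsub>M a\<^esub>)"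
  and add_prod: "x \<oplus>\<^bsub>P\<^esub> y = (\<lambda>a\<in>B. x a \<oplus>\<^bsub>M a\<^esub> y a)"
  and smult_prod: "c \<odot>\<^bsub>P\<^esub> y = (\<lambda>a\<in>B. c \<odot>\<^bsub>M a\<^esub> y a)"
  by (simp_all add: prod_module_def)

lemma zero_prod_closed: "\<zero>\<^bsub>P\<^esub> \<in> carrier P"
  by (auto simp: zero_prod mem_carrier_prod)

lemma add_prod_closed: "x \<in> carrier P \<Longrightarrow> y \<in> carrier P \<Longrightarrow> x \<oplus>\<^bsub>P\<^esub> y \<in> carrier P"
  by (auto simp: add_prod mem_carrier_prod)

lemma smult_prod_closed: "c \<in> carrier R \<Longrightarrow> y \<in> carrier P \<Longrightarrow> c \<odot>\<^bsub>P\<^esub> y \<in> carrier P"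
  by (auto simp: smult_prod mem_carrier_prod)

definition fin_class :: "('b \<Rightarrow> 'm) \<Rightarrow> ('b \<Rightarrow> 'm) set" where
  "fin_class y = {z \<in> carrier P. finite {a\<in>B. z a \<noteq> y a}}"

lemma dsum_coset_eq_fin_class:
  assumes y: "y \<in> carrier P"
  shows "S +>\<^bsub>P\<^esub> y = fin_class y"
proof
  show "S +>\<^bsub>P\<^esub> y \<subseteq> fin_class y"
  proof
    fix z assume "z \<in> S +>\<^bsub>P\<^esub> y"
    then obtain h where h: "h \<in> S" "z = h \<oplus>\<^bsub>P\<^esub> y"
      unfolding a_r_coset_def' by blast
    then have "z \<in> carrier P"
      using y by (auto simp: dsum_carrier_def add_prod_closed)
    moreover have "{a\<in>B. z a \<noteq> y a} \<subseteq> {a\<in>B. h a \<noteq> \<zero>\<^bsub>M a\<^esub>}"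
      using h y by (auto simp: add_prod mem_carrier_prod)
    ultimately show "z \<in> fin_class y"
      using h(1) finite_subset unfolding dsum_carrier_def fin_class_def by blast
  qed
next
  show "fin_class y \<subseteq> S +>\<^bsub>P\<^esub> y"
  proof
    fix z assume "z \<in> fin_class y"
    then have z: "z \<in> carrier P" and fin: "finite {a\<in>B. z a \<noteq> y a}"
      by (auto simp: fin_class_def)
    define h where "h = (\<lambda>a\<in>B. z a \<ominus>\<^bsub>M a\<^esub> y a)"
    have "h \<in> carrier P"
      using z y by (auto simp: h_def mem_carrier_prod)
    moreover have "{a\<in>B. h a \<noteq> \<zero>\<^bsub>M a\<^esub>} \<subseteq> {a\<in>B. z a \<noteq> y a}"
      using z y by (auto simp: h_def mem_carrier_prod)
    ultimately have "h \<in> S"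
      using fin finite_subset unfolding dsum_carrier_def by blast
    moreover have "h \<oplus>\<^bsub>P\<^esub> y = z"
      using z y by (auto simp: h_def add_prod mem_carrier_prod PiE_def extensional_def)
    ultimately show "z \<in> S +>\<^bsub>P\<^esub> y"
      unfolding a_r_coset_def' by blast
  qed
qed

lemma self_in_fin_class: "y \<in> carrier P \<Longrightarrow> y \<in> fin_class y"
  by (simp add: fin_class_def)

lemma fin_class_eq_iff:
  assumes "y \<in> carrier P" "z \<in> carrier P"
  shows "fin_class y = fin_class z \<longleftrightarrow> finite {a\<in>B. y a \<noteq> z a}"
proof
  assume "fin_class y = fin_class z"
  then show "finite {a\<in>B. y a \<noteq> z a}"
    using self_in_fin_class[OF assms(1)] by (simp add: fin_class_def)
next
  assume fin: "finite {a\<in>B. y a \<noteq> z a}"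
  have "finite {a\<in>B. x a \<noteq> z a}" if "finite {a\<in>B. x a \<noteq> y a}" for x
    by (rule finite_subset[OF _ finite_UnI[OF that fin]]) auto
  moreover have "finite {a\<in>B. x a \<noteq> y a}" if "finite {a\<in>B. x a \<noteq> z a}" for x
    by (rule finite_subset[OF _ finite_UnI[OF that fin]]) auto
  ultimately show "fin_class y = fin_class z"
    unfolding fin_class_def by blast
qed

lemma carrier_quot: "carrier Q = fin_class ` carrier P"
  by (auto simp: quot_module_def A_RCOSETS_def' dsum_coset_eq_fin_class)

lemma zero_quot: "\<zero>\<^bsub>Q\<^esub> = fin_class \<zero>\<^bsub>P\<^esub>"
  by (auto simp: quot_module_def dsum_carrier_def fin_class_def zero_prod mem_carrier_prod
      elim!: finite_subset[rotated])

lemma add_quot: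
  assumes "y \<in> carrier P" "z \<in> carrier P"
  shows "fin_class y \<oplus>\<^bsub>Q\<^esub> fin_class z = fin_class (y \<oplus>\<^bsub>P\<^esub> z)"
proof -
  have "set_add P (fin_class y) (fin_class z) = fin_class (y \<oplus>\<^bsub>P\<^esub> z)"
  proof
    show "set_add P (fin_class y) (fin_class z) \<subseteq> fin_class (y \<oplus>\<^bsub>P\<^esub> z)"
    proof
      fix w assume "w \<in> set_add P (fin_class y) (fin_class z)"
      then obtain u v where uv: "u \<in> fin_class y" "v \<in> fin_class z" "w = u \<oplus>\<^bsub>P\<^esub> v"
        unfolding set_add_def' by blast
      have "{a\<in>B. w a \<noteq> (y \<oplus>\<^bsub>P\<^esub> z) a} \<subseteq> {a\<in>B. u a \<noteq> y a} \<union> {a\<in>B. v a \<noteq> z a}"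
        using uv by (auto simp: add_prod)
      moreover have "w \<in> carrier P"
        using uv add_prod_closed by (auto simp: fin_class_def)
      ultimately show "w \<in> fin_class (y \<oplus>\<^bsub>P\<^esub> z)"
        using uv unfolding fin_class_def by (auto intro: finite_subset)
    qed
  next
    show "fin_class (y \<oplus>\<^bsub>P\<^esub> z) \<subseteq> set_add P (fin_class y) (fin_class z)"
    proof
      fix w assume "w \<in> fin_class (y \<oplus>\<^bsub>P\<^esub> z)"
      then have w: "w \<in> carrier P" and fin: "finite {a\<in>B. w a \<noteq> (y \<oplus>\<^bsub>P\<^esub> z) a}"
        by (auto simp: fin_class_def)
      define u where "u = (\<lambda>a\<in>B. w a \<ominus>\<^bsub>M a\<^esub> z a)"
      have "u \<in> carrier P"
        using w assms by (auto simp: u_def mem_carrier_prod)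
      moreover have "{a\<in>B. u a \<noteq> y a} \<subseteq> {a\<in>B. w a \<noteq> (y \<oplus>\<^bsub>P\<^esub> z) a}"
        using w assms by (auto simp: u_def add_prod mem_carrier_prod)
      ultimately have "u \<in> fin_class y"
        using fin finite_subset unfolding fin_class_def by blast
      moreover have "w = u \<oplus>\<^bsub>P\<^esub> z"
        using w assms by (auto simp: u_def add_prod mem_carrier_prod PiE_def extensional_def)
      ultimately show "w \<in> set_add P (fin_class y) (fin_class z)"
        using self_in_fin_class[OF assms(2)] unfolding set_add_def' by blast
    qed
  qed
  then show ?thesis by (simp add: quot_module_def)
qed

lemma smult_quot:
  assumes c: "c \<in> carrier R" and y: "y \<in> carrier P"
  shows "c \<odot>\<^bsub>Q\<^esub> fin_class y = fin_class (c \<odot>\<^bsub>P\<^esub> y)"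
proof -
  have "S +>\<^bsub>P\<^esub> (c \<odot>\<^bsub>P\<^esub> x) = fin_class (c \<odot>\<^bsub>P\<^esub> y)" if "x \<in> fin_class y" for x
  proof -
    have x: "x \<in> carrier P" and fin: "finite {a\<in>B. x a \<noteq> y a}"
      using that by (auto simp: fin_class_def)
    have "{a\<in>B. (c \<odot>\<^bsub>P\<^esub> x) a \<noteq> (c \<odot>\<^bsub>P\<^esub> y) a} \<subseteq> {a\<in>B. x a \<noteq> y a}"
      by (auto simp: smult_prod)
    then have "fin_class (c \<odot>\<^bsub>P\<^esub> x) = fin_class (c \<odot>\<^bsub>P\<^esub> y)"
      using fin_class_eq_iff[OF smult_prod_closed[OF c x] smult_prod_closed[OF c y]]
        finite_subset[OF _ fin] by blast
    then show ?thesis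
      using dsum_coset_eq_fin_class[OF smult_prod_closed[OF c x]] by simp
  qed
  then have "c \<odot>\<^bsub>Q\<^esub> fin_class y = (\<Union>x\<in>fin_class y. fin_class (c \<odot>\<^bsub>P\<^esub> y))"
    by (simp add: quot_module_def)
  then show ?thesis
    using self_in_fin_class[OF y] by auto
qed

lemma add_prod_assoc:
  "x \<in> carrier P \<Longrightarrow> y \<in> carrier P \<Longrightarrow> z \<in> carrier P \<Longrightarrow>
   (x \<oplus>\<^bsub>P\<^esub> y) \<oplus>\<^bsub>P\<^esub> z = x \<oplus>\<^bsub>P\<^esub> (y \<oplus>\<^bsub>P\<^esub> z)"
  by (auto simp: add_prod mem_carrier_prod add_assoc)

lemma add_prod_comm: "x \<in> carrier P \<Longrightarrow> y \<in> carrier P \<Longrightarrow> x \<oplus>\<^bsub>P\<^esub> y = y \<oplus>\<^bsub>P\<^esub> x"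
  by (auto simp: add_prod mem_carrier_prod add_comm)

lemma zero_add_prod: "x \<in> carrier P \<Longrightarrow> \<zero>\<^bsub>P\<^esub> \<oplus>\<^bsub>P\<^esub> x = x"
  by (auto simp: add_prod zero_prod mem_carrier_prod PiE_def extensional_def)

lemma quot_representatives:
  assumes "\<forall>i\<in>I. m i \<in> carrier Q"
  obtains y where "\<forall>i\<in>I. y i \<in> carrier P \<and> m i = fin_class (y i)"
proof -
  have "\<forall>i\<in>I. \<exists>y. y \<in> carrier P \<and> m i = fin_class y"
    using assms by (auto simp: carrier_quot)
  then show ?thesis
    using that by metis
qed

lemma quot_abelian_monoid: "abelian_monoid Q"
proof (rule abelian_monoidI)
  fix x y assume "x \<in> carrier Q" "y \<in> carrier Q"
  then show "x \<oplus>\<^bsub>Q\<^esub> y \<in> carrier Q"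
    by (auto simp: carrier_quot add_quot add_prod_closed)
next
  fix x y assume "x \<in> carrier Q" "y \<in> carrier Q"
  then show "x \<oplus>\<^bsub>Q\<^esub> y = y \<oplus>\<^bsub>Q\<^esub> x"
    by (auto simp: carrier_quot add_quot add_prod_comm)
next
  fix x y z assume "x \<in> carrier Q" "y \<in> carrier Q" "z \<in> carrier Q"
  then show "x \<oplus>\<^bsub>Q\<^esub> y \<oplus>\<^bsub>Q\<^esub> z = x \<oplus>\<^bsub>Q\<^esub> (y \<oplus>\<^bsub>Q\<^esub> z)"
    by (auto simp: carrier_quot add_quot add_prod_closed add_prod_assoc)
next
  show "\<zero>\<^bsub>Q\<^esub> \<in> carrier Q"
    by (simp add: carrier_quot zero_quot zero_prod_closed)
next
  fix x assume "x \<in> carrier Q"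
  then show "\<zero>\<^bsub>Q\<^esub> \<oplus>\<^bsub>Q\<^esub> x = x"
    by (auto simp: carrier_quot zero_quot add_quot zero_prod_closed zero_add_prod)
qed

lemma finsum_quot:
  assumes "finite F" "\<And>j. j \<in> F \<Longrightarrow> c j \<in> carrier R" "\<And>j. j \<in> F \<Longrightarrow> X j \<in> carrier P"
  shows "finsum Q (\<lambda>j. c j \<odot>\<^bsub>Q\<^esub> fin_class (X j)) F
       = fin_class (\<lambda>a\<in>B. finsum (M a) (\<lambda>j. c j \<odot>\<^bsub>M a\<^esub> X j a) F)"
  using assms
proof (induction F rule: finite_induct)
  case empty
  then show ?case
    by (simp add: abelian_monoid.finsum_empty[OF quot_abelian_monoid] zero_quot zero_prod
        abelian_monoid.finsum_empty[OF abelian_monoid] restrict_def cong: if_cong)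
next
  case (insert j F)
  define Y where "Y = (\<lambda>a\<in>B. finsum (M a) (\<lambda>j. c j \<odot>\<^bsub>M a\<^esub> X j a) F)"
  have Y: "Y \<in> carrier P"
    using insert by (auto simp: Y_def mem_carrier_prod intro!: abelian_monoid.finsum_closed[OF abelian_monoid])
  have "finsum Q (\<lambda>j. c j \<odot>\<^bsub>Q\<^esub> fin_class (X j)) (insert j F)
      = c j \<odot>\<^bsub>Q\<^esub> fin_class (X j) \<oplus>\<^bsub>Q\<^esub> finsum Q (\<lambda>j. c j \<odot>\<^bsub>Q\<^esub> fin_class (X j)) F"
    using insert by (intro abelian_monoid.finsum_insert[OF quot_abelian_monoid])
      (auto simp: smult_quot carrier_quot smult_prod_closed)
  also have "\<dots> = fin_class (c j \<odot>\<^bsub>P\<^esub> X j) \<oplus>\<^bsub>Q\<^esub> fin_class Y"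
    using insert by (simp add: smult_quot Y_def restrict_def)
  also have "\<dots> = fin_class ((c j \<odot>\<^bsub>P\<^esub> X j) \<oplus>\<^bsub>P\<^esub> Y)"
    using insert Y by (intro add_quot) (auto simp: smult_prod_closed)
  also have "(c j \<odot>\<^bsub>P\<^esub> X j) \<oplus>\<^bsub>P\<^esub> Y = (\<lambda>a\<in>B. finsum (M a) (\<lambda>j. c j \<odot>\<^bsub>M a\<^esub> X j a) (insert j F))"
    using insert by (auto simp: add_prod smult_prod Y_def mem_carrier_prod
        abelian_monoid.finsum_insert[OF abelian_monoid] intro!: restrict_ext)
  finally show ?case .
qed

end

section \<open>A diagonal argument\<close>

lemma countable_diagonal:
  fixes E :: "nat \<Rightarrow> 'b set"
  assumes "countable B" and fin: "\<And>n. finite (E n)"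
  obtains \<nu> :: "'b \<Rightarrow> nat" where "\<And>m. finite {a\<in>B. \<nu> a < m \<or> a \<in> E (\<nu> a)}"
proof -
  define g where "g = to_nat_on B"
  define N where "N n = Suc (Max (insert 0 (g ` E n)))" for n
  have EN: "g a < N n" if "a \<in> E n" for a n
    using fin[of n] that by (auto simp: N_def intro!: le_imp_less_Suc Max_ge)
  define \<nu> where "\<nu> a = Max {n. n \<le> g a \<and> N n \<le> g a}" for a
  have "finite {a\<in>B. \<nu> a < m \<or> a \<in> E (\<nu> a)}" for m
  proof -
    have "{a\<in>B. \<nu> a < m \<or> a \<in> E (\<nu> a)} \<subseteq> {a\<in>B. g a < max m (N m)}"
    proof (rule subsetI, rule ccontr)
      fix a assume a: "a \<in> {a\<in>B. \<nu> a < m \<or> a \<in> E (\<nu> a)}" "a \<notin> {a\<in>B. g a < max m (N m)}"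
      define S where "S = {n. n \<le> g a \<and> N n \<le> g a}"
      have "finite S"
        by (rule finite_subset[of _ "{..g a}"]) (auto simp: S_def)
      moreover have "m \<in> S"
        using a by (auto simp: S_def max_def split: if_splits)
      moreover have "\<nu> a = Max S"
        unfolding \<nu>_def S_def ..
      ultimately have "m \<le> \<nu> a" "\<nu> a \<in> S"
        using Max_ge Max_in by auto
      then show False
        using a EN[of a "\<nu> a"] by (auto simp: S_def)
    qed
    moreover have "{a\<in>B. g a < max m (N m)} = g -` {..<max m (N m)} \<inter> B"
      by auto
    then have "finite {a\<in>B. g a < max m (N m)}"
      using finite_vimage_IntI[OF _ inj_on_to_nat_on[OF assms(1)]] by (simp add: g_def)
    ultimately show ?thesis
      by (rule finite_subset)
  qed
  then show ?thesis
    by (rule that)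
qed

section \<open>Almost solutions\<close>

text \<open>The right-hand sides are representatives \<open>rhs i\<close> in the product. A partial assignment of
  representatives to the unknowns is encoded as a relation \<open>G\<close> between unknowns and values.\<close>

locale quot_system = module_family R B M
  for R :: "'r ring" and B :: "'b set" and M :: "'b \<Rightarrow> ('r, 'm) module" +
  fixes I :: "'i set" and J :: "'j set" and r :: "'i \<Rightarrow> 'j \<Rightarrow> 'r" and rhs :: "'i \<Rightarrow> 'b \<Rightarrow> 'm"
  assumes row_finite: "row_finite_system R I J r"
    and rhs_closed: "\<forall>i\<in>I. rhs i \<in> carrier P"
begin

definition coord_lc :: "'b \<Rightarrow> ('j \<Rightarrow> 'b \<Rightarrow> 'm) \<Rightarrow> 'i \<Rightarrow> 'm" where
  "coord_lc a X i = lin_comb R (M a) r (\<lambda>j. X j a) i J"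

definition almost_sol :: "'i set \<Rightarrow> ('j \<Rightarrow> 'b \<Rightarrow> 'm) \<Rightarrow> bool" where
  "almost_sol I0 X \<longleftrightarrow>
     (\<forall>j\<in>J. X j \<in> carrier P) \<and> (\<forall>i\<in>I0. finite {a\<in>B. coord_lc a X i \<noteq> rhs i a})"

definition agrees_with :: "('j \<times> ('b \<Rightarrow> 'm)) set \<Rightarrow> ('j \<Rightarrow> 'b \<Rightarrow> 'm) \<Rightarrow> bool" where
  "agrees_with G X \<longleftrightarrow> (\<forall>(j, p)\<in>G. X j = p)"

definition fin_solvable_with :: "('j \<times> ('b \<Rightarrow> 'm)) set \<Rightarrow> bool" where
  "fin_solvable_with G \<longleftrightarrow>
     (\<forall>I0. finite I0 \<and> I0 \<subseteq> I \<longrightarrow> (\<exists>X. almost_sol I0 X \<and> agrees_with G X))"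

lemma coeff_closed: "i \<in> I \<Longrightarrow> j \<in> J \<Longrightarrow> r i j \<in> carrier R"
  using row_finite by (simp add: row_finite_system_def)

lemma rhs_closed_at: "i \<in> I \<Longrightarrow> a \<in> B \<Longrightarrow> rhs i a \<in> carrier (M a)"
  using rhs_closed by (simp add: mem_carrier_prod)

lemma finite_row_support: "i \<in> I \<Longrightarrow> finite {j\<in>J. r i j \<noteq> \<zero>\<^bsub>R\<^esub>}"
  using row_finite by (simp add: row_finite_system_def)

lemma almost_sol_mono: "almost_sol I1 X \<Longrightarrow> I0 \<subseteq> I1 \<Longrightarrow> almost_sol I0 X"
  by (auto simp: almost_sol_def)

lemma agrees_withI: "(\<And>j p. (j, p) \<in> G \<Longrightarrow> X j = p) \<Longrightarrow> agrees_with G X"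
  by (auto simp: agrees_with_def)

lemma agrees_withD: "agrees_with G X \<Longrightarrow> (j, p) \<in> G \<Longrightarrow> X j = p"
  by (auto simp: agrees_with_def)

lemma coord_lc_cong:
  assumes "i \<in> I" "a \<in> B" "\<forall>j\<in>J. X j \<in> carrier P" "\<forall>j\<in>J. Y j \<in> carrier P"
    and "\<And>j. j \<in> J \<Longrightarrow> r i j \<noteq> \<zero>\<^bsub>R\<^esub> \<Longrightarrow> X j a = Y j a"
  shows "coord_lc a X i = coord_lc a Y i"
  unfolding coord_lc_def lin_comb_def
  using assms by (intro abelian_monoid.finsum_cong'[OF abelian_monoid])
    (auto simp: mem_carrier_prod coeff_closed)

lemma coord_lc_closed:
  assumes "i \<in> I" "a \<in> B" "\<forall>j\<in>J. X j \<in> carrier P"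
  shows "coord_lc a X i \<in> carrier (M a)"
  unfolding coord_lc_def lin_comb_def
  using assms by (intro abelian_monoid.finsum_closed[OF abelian_monoid])
    (auto simp: mem_carrier_prod coeff_closed)

lemma coord_lc_add:
  assumes "i \<in> I" "a \<in> B" "\<forall>j\<in>J. X j \<in> carrier P" "\<forall>j\<in>J. Y j \<in> carrier P"
  shows "coord_lc a (\<lambda>j. X j \<oplus>\<^bsub>P\<^esub> Y j) i = coord_lc a X i \<oplus>\<^bsub>M a\<^esub> coord_lc a Y i"
  unfolding coord_lc_def lin_comb_def
  using assms by (simp add: add_prod, intro left_module_finsum_smult_add[OF left_module_at])
    (auto simp: mem_carrier_prod coeff_closed)

lemma almost_sol_add_homogeneous:
  assumes "I0 \<subseteq> I" "almost_sol I0 X" "\<forall>j\<in>J. D j \<in> carrier P"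
    and "\<forall>i\<in>I0. finite {a\<in>B. coord_lc a D i \<noteq> \<zero>\<^bsub>M a\<^esub>}"
  shows "almost_sol I0 (\<lambda>j. X j \<oplus>\<^bsub>P\<^esub> D j)"
  unfolding almost_sol_def
proof (intro conjI ballI)
  have X: "\<forall>j\<in>J. X j \<in> carrier P"
    using assms(2) by (simp add: almost_sol_def)
  then show "X j \<oplus>\<^bsub>P\<^esub> D j \<in> carrier P" if "j \<in> J" for j
    using that assms(3) by (simp add: add_prod_closed)
  fix i assume i: "i \<in> I0"
  have "{a\<in>B. coord_lc a (\<lambda>j. X j \<oplus>\<^bsub>P\<^esub> D j) i \<noteq> rhs i a}
      \<subseteq> {a\<in>B. coord_lc a X i \<noteq> rhs i a} \<union> {a\<in>B. coord_lc a D i \<noteq> \<zero>\<^bsub>M a\<^esub>}"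
    using i assms(1,3) X rhs_closed coord_lc_closed
    by (auto simp: coord_lc_add mem_carrier_prod)
  then show "finite {a\<in>B. coord_lc a (\<lambda>j. X j \<oplus>\<^bsub>P\<^esub> D j) i \<noteq> rhs i a}"
    using i assms(2,4) by (auto simp: almost_sol_def intro: finite_subset)
qed

lemma fin_solvable_with_functional:
  "fin_solvable_with G \<Longrightarrow> (j, p) \<in> G \<Longrightarrow> (j, q) \<in> G \<Longrightarrow> p = q"
  unfolding fin_solvable_with_def by (metis empty_subsetI finite.emptyI agrees_withD)

lemma fin_solvable_with_closed:
  "fin_solvable_with G \<Longrightarrow> (j, p) \<in> G \<Longrightarrow> j \<in> J \<Longrightarrow> p \<in> carrier P"
  unfolding fin_solvable_with_def almost_sol_def by (metis empty_subsetI finite.emptyI agrees_withD)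

lemma almost_sol_countable:
  assumes "countable B" and I': "countable I'" "I' \<subseteq> I"
    and "Domain G \<subseteq> J" and G: "fin_solvable_with G"
  shows "\<exists>X. almost_sol I' X \<and> agrees_with G X"
proof (cases "I' = {}")
  case True
  then show ?thesis
    using G unfolding fin_solvable_with_def by blast
next
  case False
  define K where "K n = from_nat_into I' ` {..n}" for n
  have K: "finite (K n) \<and> K n \<subseteq> I" for n
    using from_nat_into[OF False] I'(2) by (auto simp: K_def)
  have "\<forall>n. \<exists>X. almost_sol (K n) X \<and> agrees_with G X"
    using G K unfolding fin_solvable_with_def by blast
  then obtain Xs where Xs: "\<And>n. almost_sol (K n) (Xs n) \<and> agrees_with G (Xs n)"
    by metis
  define E where "E n = (\<Union>i\<in>K n. {a\<in>B. coord_lc a (Xs n) i \<noteq> rhs i a})" for n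
  have "finite (E n)" for n
    using Xs[of n] K[of n] by (auto simp: E_def almost_sol_def)
  then obtain \<nu> where \<nu>: "\<And>m. finite {a\<in>B. \<nu> a < m \<or> a \<in> E (\<nu> a)}"
    using countable_diagonal[OF assms(1)] by blast
  define X where "X j = (\<lambda>a\<in>B. Xs (\<nu> a) j a)" for j
  have "finite {a\<in>B. coord_lc a X i \<noteq> rhs i a}" if "i \<in> I'" for i
  proof -
    obtain m where m: "i = from_nat_into I' m"
      using from_nat_into_surj[OF \<open>countable I'\<close> \<open>i \<in> I'\<close>] by (metis (no_types))
    have "{a\<in>B. coord_lc a X i \<noteq> rhs i a} \<subseteq> {a\<in>B. \<nu> a < m \<or> a \<in> E (\<nu> a)}"
    proof (rule subsetI, rule ccontr)
      fix a assume a: "a \<in> {a\<in>B. coord_lc a X i \<noteq> rhs i a}" "a \<notin> {a\<in>B. \<nu> a < m \<or> a \<in> E (\<nu> a)}"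
      then have "i \<in> K (\<nu> a)"
        using m by (auto simp: K_def)
      moreover have "coord_lc a X i = coord_lc a (Xs (\<nu> a)) i"
        using a by (simp add: coord_lc_def X_def)
      ultimately show False
        using a by (auto simp: E_def)
    qed
    then show ?thesis
      using \<nu> by (rule finite_subset)
  qed
  moreover have "\<forall>j\<in>J. X j \<in> carrier P"
    using Xs by (auto simp: X_def mem_carrier_prod almost_sol_def)
  moreover have "agrees_with G X"
    unfolding agrees_with_def
  proof clarify
    fix j p assume jp: "(j, p) \<in> G"
    then have "p \<in> carrier P"
      using G assms(4) fin_solvable_with_closed by blast
    moreover have "Xs n j = p" for n
      using Xs jp agrees_withD by blast
    ultimately show "X j = p"
      by (auto simp: X_def mem_carrier_prod extensional_def)
  qed
  ultimately show ?thesis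
    by (auto simp: almost_sol_def)
qed


section \<open>Row patterns\<close>

definition vars :: "'i set \<Rightarrow> 'j set" where
  "vars I0 = {j\<in>J. \<exists>i\<in>I0. r i j \<noteq> \<zero>\<^bsub>R\<^esub>}"

lemma finite_vars: "finite I0 \<Longrightarrow> I0 \<subseteq> I \<Longrightarrow> finite (vars I0)"
proof -
  assume "finite I0" "I0 \<subseteq> I"
  moreover have "vars I0 = (\<Union>i\<in>I0. {j\<in>J. r i j \<noteq> \<zero>\<^bsub>R\<^esub>})"
    by (auto simp: vars_def)
  ultimately show ?thesis
    using finite_row_support by auto
qed

text \<open>The subsystem \<open>I0\<close> seen from the unknown \<open>j0\<close>, once the unknowns in \<open>J'\<close> are fixed:
  list the remaining unknowns of \<open>I0\<close>, starting with \<open>j0\<close>, and record the rows of coefficients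
  along this list. Over a countable ring there are only countably many such patterns.\<close>

definition var_list :: "'j set \<Rightarrow> 'j \<Rightarrow> 'i set \<Rightarrow> 'j list" where
  "var_list J' j0 I0 = j0 # (SOME xs. distinct xs \<and> set xs = vars I0 - J' - {j0})"

definition row_pattern :: "'j set \<Rightarrow> 'j \<Rightarrow> 'i set \<Rightarrow> 'r list set" where
  "row_pattern J' j0 I0 = (\<lambda>i. map (r i) (var_list J' j0 I0)) ` I0"

definition homog_values :: "'j set \<Rightarrow> 'j \<Rightarrow> 'i set \<Rightarrow> ('b \<Rightarrow> 'm) set" where
  "homog_values J' j0 I0 = {D j0 | D. (\<forall>j\<in>J. D j \<in> carrier P) \<and> (\<forall>j\<in>J'. D j = \<zero>\<^bsub>P\<^esub>) \<and>
      (\<forall>i\<in>I0. finite {a\<in>B. coord_lc a D i \<noteq> \<zero>\<^bsub>M a\<^esub>})}"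

definition row_homog_values :: "'r list set \<Rightarrow> ('b \<Rightarrow> 'm) set" where
  "row_homog_values rows = {y 0 | y. (\<forall>k. y k \<in> carrier P) \<and>
      (\<forall>row\<in>rows. finite {a\<in>B. finsum (M a) (\<lambda>k. (row ! k) \<odot>\<^bsub>M a\<^esub> y k a) {..<length row}
                                 \<noteq> \<zero>\<^bsub>M a\<^esub>})}"

lemma var_list:
  assumes "finite I0" "I0 \<subseteq> I"
  shows "distinct (var_list J' j0 I0)" "set (var_list J' j0 I0) = insert j0 (vars I0 - J')"
    and "var_list J' j0 I0 ! 0 = j0"
proof -
  have "finite (vars I0 - J' - {j0})"
    using finite_vars[OF assms] by simp
  then have "\<exists>xs. distinct xs \<and> set xs = vars I0 - J' - {j0}"
    by (metis finite_distinct_list)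
  then have "distinct (SOME xs. distinct xs \<and> set xs = vars I0 - J' - {j0}) \<and>
      set (SOME xs. distinct xs \<and> set xs = vars I0 - J' - {j0}) = vars I0 - J' - {j0}"
    by (rule someI_ex)
  then show "distinct (var_list J' j0 I0)" "set (var_list J' j0 I0) = insert j0 (vars I0 - J')"
    and "var_list J' j0 I0 ! 0 = j0"
    by (auto simp: var_list_def)
qed

lemma row_pattern_in_finite_lists:
  assumes "finite I0" "I0 \<subseteq> I" "j0 \<in> J"
  shows "row_pattern J' j0 I0 \<in> {A. finite A \<and> A \<subseteq> lists (carrier R)}"
proof -
  have "set (var_list J' j0 I0) \<subseteq> J"
    using var_list(2)[OF assms(1,2)] assms(3) by (auto simp: vars_def)
  then show ?thesis
    using assms(1,2) by (force simp: row_pattern_def intro: coeff_closed)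
qed

lemma coord_lc_eq_row_sum:
  assumes a: "a \<in> B" and i: "i \<in> I"
    and v: "distinct v" "set v \<subseteq> J" "{j\<in>J. r i j \<noteq> \<zero>\<^bsub>R\<^esub>} - J' \<subseteq> set v"
    and D: "\<forall>j\<in>J. D j \<in> carrier P" "\<forall>j\<in>J'. D j = \<zero>\<^bsub>P\<^esub>"
    and y: "\<And>k. k < length v \<Longrightarrow> y k = D (v ! k)"
  shows "coord_lc a D i
      = finsum (M a) (\<lambda>k. (map (r i) v ! k) \<odot>\<^bsub>M a\<^esub> y k a) {..<length (map (r i) v)}"
proof -
  interpret Ma: abelian_monoid "M a"
    using abelian_monoid[OF a] .
  define F where "F = {j\<in>J. r i j \<noteq> \<zero>\<^bsub>R\<^esub>}"
  have vJ: "v ! k \<in> J" if "k < length v" for k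
    using v(2) that nth_mem by blast
  have "coord_lc a D i = finsum (M a) (\<lambda>j. r i j \<odot>\<^bsub>M a\<^esub> D j a) F"
    by (simp add: coord_lc_def lin_comb_def F_def)
  also have "\<dots> = finsum (M a) (\<lambda>j. r i j \<odot>\<^bsub>M a\<^esub> D j a) (set v)"
  proof (rule Ma.add.finprod_mono_neutral_cong)
    show "r i j \<odot>\<^bsub>M a\<^esub> D j a = \<zero>\<^bsub>M a\<^esub>" if "j \<in> set v - F" for j
      using that v(2) D(1) a left_module_zero_smult[OF left_module_at[OF a]]
      by (auto simp: F_def mem_carrier_prod)
    show "r i j \<odot>\<^bsub>M a\<^esub> D j a = \<zero>\<^bsub>M a\<^esub>" if "j \<in> F - set v" for j
      using that v(3) D(2) a left_module_smult_zero[OF left_module_at[OF a] coeff_closed[OF i]]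
      by (auto simp: F_def zero_prod)
  qed (use a v(2) D(1) finite_row_support[OF i] in \<open>auto simp: F_def mem_carrier_prod coeff_closed[OF i]\<close>)
  also have "set v = (!) v ` {..<length v}"
    by (auto simp: set_conv_nth)
  also have "finsum (M a) (\<lambda>j. r i j \<odot>\<^bsub>M a\<^esub> D j a) ((!) v ` {..<length v})
      = finsum (M a) (\<lambda>k. r i (v ! k) \<odot>\<^bsub>M a\<^esub> D (v ! k) a) {..<length v}"
  proof (rule Ma.finsum_reindex)
    show "(\<lambda>j. r i j \<odot>\<^bsub>M a\<^esub> D j a) \<in> (!) v ` {..<length v} \<rightarrow> carrier (M a)"
      using a D(1) vJ by (auto simp: mem_carrier_prod coeff_closed[OF i])
  qed (use inj_on_nth[OF v(1), of "{..<length v}"] in auto)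
  also have "\<dots> = finsum (M a) (\<lambda>k. (map (r i) v ! k) \<odot>\<^bsub>M a\<^esub> y k a) {..<length (map (r i) v)}"
    using a D(1) vJ y by (intro Ma.finsum_cong') (auto simp: mem_carrier_prod coeff_closed[OF i])
  finally show ?thesis .
qed

lemma var_list_covers:
  assumes "finite I0" "I0 \<subseteq> I" "j0 \<in> J" "j0 \<notin> J'"
  shows "set (var_list J' j0 I0) \<subseteq> J" "set (var_list J' j0 I0) \<inter> J' = {}"
    and "\<And>i. i \<in> I0 \<Longrightarrow> {j\<in>J. r i j \<noteq> \<zero>\<^bsub>R\<^esub>} - J' \<subseteq> set (var_list J' j0 I0)"
  using var_list(2)[OF assms(1,2)] assms(3,4) by (auto simp: vars_def)

lemma homog_values_subset_row_homog_values:
  assumes I0: "finite I0" "I0 \<subseteq> I" and j0: "j0 \<in> J" "j0 \<notin> J'"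
  shows "homog_values J' j0 I0 \<subseteq> row_homog_values (row_pattern J' j0 I0)"
proof
  define v where "v = var_list J' j0 I0"
  note v = var_list[OF I0, of J' j0, folded v_def] var_list_covers[OF I0 j0, folded v_def]
  fix z assume "z \<in> homog_values J' j0 I0"
  then obtain D where z: "z = D j0" and D: "\<forall>j\<in>J. D j \<in> carrier P" "\<forall>j\<in>J'. D j = \<zero>\<^bsub>P\<^esub>"
    and hom: "\<forall>i\<in>I0. finite {a\<in>B. coord_lc a D i \<noteq> \<zero>\<^bsub>M a\<^esub>}"
    unfolding homog_values_def by blast
  define y where "y k = (if k < length v then D (v ! k) else \<zero>\<^bsub>P\<^esub>)" for k
  have "\<forall>k. y k \<in> carrier P"
    using D(1) v(4) nth_mem zero_prod_closed by (auto simp: y_def)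
  moreover have "y 0 = z"
    using v(3) z by (simp add: y_def v_def var_list_def)
  moreover have "finite {a\<in>B. finsum (M a) (\<lambda>k. (map (r i) v ! k) \<odot>\<^bsub>M a\<^esub> y k a)
      {..<length (map (r i) v)} \<noteq> \<zero>\<^bsub>M a\<^esub>}" if i: "i \<in> I0" for i
  proof -
    have "coord_lc a D i
        = finsum (M a) (\<lambda>k. (map (r i) v ! k) \<odot>\<^bsub>M a\<^esub> y k a) {..<length (map (r i) v)}"
      if "a \<in> B" for a
      using that i I0 by (intro coord_lc_eq_row_sum[OF _ _ v(1) v(4) v(6) D]) (auto simp: y_def)
    then show ?thesis
      using hom i by (auto elim!: finite_subset[rotated])
  qed
  ultimately show "z \<in> row_homog_values (row_pattern J' j0 I0)"
    unfolding row_homog_values_def row_pattern_def v_def[symmetric]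
    by (intro CollectI exI[of _ y]) auto
qed

lemma row_homog_values_subset_homog_values:
  assumes I0: "finite I0" "I0 \<subseteq> I" and j0: "j0 \<in> J" "j0 \<notin> J'"
  shows "row_homog_values (row_pattern J' j0 I0) \<subseteq> homog_values J' j0 I0"
proof
  define v where "v = var_list J' j0 I0"
  note v = var_list[OF I0, of J' j0, folded v_def] var_list_covers[OF I0 j0, folded v_def]
  fix z assume "z \<in> row_homog_values (row_pattern J' j0 I0)"
  then obtain y where z: "z = y 0" and y: "\<forall>k. y k \<in> carrier P"
    and hom: "\<forall>i\<in>I0. finite {a\<in>B. finsum (M a) (\<lambda>k. (map (r i) v ! k) \<odot>\<^bsub>M a\<^esub> y k a)
                                          {..<length (map (r i) v)} \<noteq> \<zero>\<^bsub>M a\<^esub>}"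
    unfolding row_homog_values_def row_pattern_def v_def[symmetric] by blast
  define D where
    "D j = (if j \<in> set v then y (the_inv_into {..<length v} ((!) v) j) else \<zero>\<^bsub>P\<^esub>)" for j
  have Dv: "D (v ! k) = y k" if "k < length v" for k
    using that inj_on_nth[OF v(1), of "{..<length v}"] by (simp add: D_def the_inv_into_f_f)
  have D: "\<forall>j\<in>J. D j \<in> carrier P" "\<forall>j\<in>J'. D j = \<zero>\<^bsub>P\<^esub>"
    using y zero_prod_closed v(5) by (auto simp: D_def)
  have "D j0 = z"
    using Dv[of 0] v(3) z by (simp add: v_def var_list_def)
  moreover have "finite {a\<in>B. coord_lc a D i \<noteq> \<zero>\<^bsub>M a\<^esub>}" if i: "i \<in> I0" for i
  proof -
    have "coord_lc a D i
        = finsum (M a) (\<lambda>k. (map (r i) v ! k) \<odot>\<^bsub>M a\<^esub> y k a) {..<length (map (r i) v)}"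
      if "a \<in> B" for a
      using that i I0 Dv by (intro coord_lc_eq_row_sum[OF _ _ v(1) v(4) v(6) D]) auto
    then show ?thesis
      using hom i by (auto elim!: finite_subset[rotated])
  qed
  ultimately show "z \<in> homog_values J' j0 I0"
    using D unfolding homog_values_def by (intro CollectI exI[of _ D]) auto
qed

lemma homog_values_eq_row_homog_values:
  assumes "finite I0" "I0 \<subseteq> I" "j0 \<in> J" "j0 \<notin> J'"
  shows "homog_values J' j0 I0 = row_homog_values (row_pattern J' j0 I0)"
  using assms
  by (intro equalityI homog_values_subset_row_homog_values row_homog_values_subset_homog_values)

lemma countable_row_pattern_representatives:
  assumes "countable (carrier R)" "j0 \<in> J"
  obtains I' where "countable I'" "I' \<subseteq> I"
    and "\<And>I0. finite I0 \<Longrightarrow> I0 \<subseteq> I \<Longrightarrow>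
           \<exists>K. finite K \<and> K \<subseteq> I' \<and> row_pattern J' j0 K = row_pattern J' j0 I0"
proof -
  define Fam where "Fam = {I0. finite I0 \<and> I0 \<subseteq> I}"
  define rep where "rep t = (SOME K. K \<in> Fam \<and> row_pattern J' j0 K = t)" for t
  have rep: "rep (row_pattern J' j0 I0) \<in> Fam \<and>
      row_pattern J' j0 (rep (row_pattern J' j0 I0)) = row_pattern J' j0 I0" if "I0 \<in> Fam" for I0
    unfolding rep_def by (rule someI_ex) (use that in blast)
  have "row_pattern J' j0 ` Fam \<subseteq> {A. finite A \<and> A \<subseteq> lists (carrier R)}"
    using row_pattern_in_finite_lists assms(2) unfolding Fam_def by blast
  then have "countable (row_pattern J' j0 ` Fam)"
    using countable_subset countable_Collect_finite_subset[OF countable_lists[OF assms(1)]] by blast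
  then have "countable (\<Union>(rep ` row_pattern J' j0 ` Fam))"
    using rep by (intro countable_UN) (auto simp: Fam_def intro: countable_finite)
  moreover have "\<Union>(rep ` row_pattern J' j0 ` Fam) \<subseteq> I"
    using rep by (auto simp: Fam_def)
  moreover have "\<exists>K. finite K \<and> K \<subseteq> \<Union>(rep ` row_pattern J' j0 ` Fam) \<and>
      row_pattern J' j0 K = row_pattern J' j0 I0" if "finite I0" "I0 \<subseteq> I" for I0
    using that rep[of I0] by (intro exI[of _ "rep (row_pattern J' j0 I0)"]) (auto simp: Fam_def)
  ultimately show ?thesis
    by (rule that)
qed

section \<open>Extending partial assignments\<close>

lemma diff_in_homog_values:
  assumes "K \<subseteq> I" "Domain G \<subseteq> J"
    and X: "almost_sol K X" "agrees_with G X" and Y: "almost_sol K Y" "agrees_with G Y"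
  shows "(\<lambda>a\<in>B. X j0 a \<ominus>\<^bsub>M a\<^esub> Y j0 a) \<in> homog_values (Domain G) j0 K"
proof -
  have Xc: "\<forall>j\<in>J. X j \<in> carrier P" and Yc: "\<forall>j\<in>J. Y j \<in> carrier P"
    using X Y by (simp_all add: almost_sol_def)
  define D where "D j = (\<lambda>a\<in>B. X j a \<ominus>\<^bsub>M a\<^esub> Y j a)" for j
  have Dc: "\<forall>j\<in>J. D j \<in> carrier P"
    using Xc Yc by (auto simp: D_def mem_carrier_prod)
  have "D j = \<zero>\<^bsub>P\<^esub>" if j: "j \<in> Domain G" for j
  proof -
    obtain p where "(j, p) \<in> G"
      using j by blast
    then have "X j = Y j" "j \<in> J"
      using X(2) Y(2) assms(2) agrees_withD by blast+
    then show ?thesis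
      using Yc by (auto simp: D_def zero_prod mem_carrier_prod)
  qed
  moreover have "finite {a\<in>B. coord_lc a D i \<noteq> \<zero>\<^bsub>M a\<^esub>}" if i: "i \<in> K" for i
  proof -
    have iI: "i \<in> I"
      using i assms(1) by blast
    have "X j = Y j \<oplus>\<^bsub>P\<^esub> D j" if "j \<in> J" for j
      using that Xc Yc by (auto simp: D_def add_prod mem_carrier_prod PiE_def extensional_def)
    then have "coord_lc a X i = coord_lc a Y i \<oplus>\<^bsub>M a\<^esub> coord_lc a D i" if "a \<in> B" for a
      using that iI Xc Yc Dc
      by (subst coord_lc_add[symmetric]) (auto intro!: coord_lc_cong simp: add_prod_closed)
    then have "{a\<in>B. coord_lc a D i \<noteq> \<zero>\<^bsub>M a\<^esub>}
        \<subseteq> {a\<in>B. coord_lc a X i \<noteq> rhs i a} \<union> {a\<in>B. coord_lc a Y i \<noteq> rhs i a}"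
      using iI Yc Dc coord_lc_closed rhs_closed_at by (auto simp: add_right_eq_self)
    then show ?thesis
      using i X(1) Y(1) by (auto simp: almost_sol_def intro: finite_subset)
  qed
  ultimately have "D j0 \<in> homog_values (Domain G) j0 K"
    using Dc unfolding homog_values_def by auto
  then show ?thesis
    by (simp add: D_def)
qed

text \<open>For finite \<open>I0\<close>, take \<open>K \<subseteq> I'\<close> with the same row pattern and an almost solution \<open>X\<close>
  of \<open>I0 \<union> K\<close> agreeing with \<open>G\<close>. Then \<open>Z - X\<close> is a homogeneous almost solution on \<open>K\<close>; its
  value at \<open>j0\<close> is therefore also attained by one on \<open>I0\<close>, and adding that to \<open>X\<close> gives the
  required almost solution of \<open>I0\<close> with value \<open>Z j0\<close> at \<open>j0\<close>.\<close>

lemma fin_solvable_with_insert: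
  assumes dom: "Domain G \<subseteq> J" and G: "fin_solvable_with G" and j0: "j0 \<in> J" "j0 \<notin> Domain G"
    and I': "I' \<subseteq> I" and Z: "almost_sol I' Z" "agrees_with G Z"
    and reps: "\<And>I0. finite I0 \<Longrightarrow> I0 \<subseteq> I \<Longrightarrow>
       \<exists>K. finite K \<and> K \<subseteq> I' \<and> row_pattern (Domain G) j0 K = row_pattern (Domain G) j0 I0"
  shows "fin_solvable_with (insert (j0, Z j0) G)"
  unfolding fin_solvable_with_def
proof (intro allI impI)
  fix I0 assume I0: "finite I0 \<and> I0 \<subseteq> I"
  obtain K where K: "finite K" "K \<subseteq> I'"
    and pattern: "row_pattern (Domain G) j0 K = row_pattern (Domain G) j0 I0"
    using reps[of I0] I0 by auto
  obtain X where X: "almost_sol (I0 \<union> K) X" "agrees_with G X"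
    using G I0 K I' unfolding fin_solvable_with_def by (meson finite_UnI le_supI order_trans)
  have Xc: "\<forall>j\<in>J. X j \<in> carrier P" and Zc: "\<forall>j\<in>J. Z j \<in> carrier P"
    using X(1) Z(1) by (simp_all add: almost_sol_def)
  have "(\<lambda>a\<in>B. Z j0 a \<ominus>\<^bsub>M a\<^esub> X j0 a) \<in> homog_values (Domain G) j0 K"
    using K I' dom Z X by (intro diff_in_homog_values) (auto intro: almost_sol_mono)
  also have "homog_values (Domain G) j0 K = homog_values (Domain G) j0 I0"
    using K I' I0 j0 pattern by (simp add: homog_values_eq_row_homog_values subset_trans)
  finally obtain D where D: "(\<lambda>a\<in>B. Z j0 a \<ominus>\<^bsub>M a\<^esub> X j0 a) = D j0"
    and Dc: "\<forall>j\<in>J. D j \<in> carrier P" and D0: "\<forall>j\<in>Domain G. D j = \<zero>\<^bsub>P\<^esub>"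
    and hom: "\<forall>i\<in>I0. finite {a\<in>B. coord_lc a D i \<noteq> \<zero>\<^bsub>M a\<^esub>}"
    unfolding homog_values_def by (elim CollectE exE conjE) (rule that; assumption)
  have "almost_sol I0 (\<lambda>j. X j \<oplus>\<^bsub>P\<^esub> D j)"
    using I0 X(1) Dc hom by (intro almost_sol_add_homogeneous) (auto intro: almost_sol_mono)
  moreover have "agrees_with (insert (j0, Z j0) G) (\<lambda>j. X j \<oplus>\<^bsub>P\<^esub> D j)"
    unfolding agrees_with_def
  proof clarify
    fix j p assume "(j, p) \<in> insert (j0, Z j0) G"
    then consider "j = j0" "p = Z j0" | "(j, p) \<in> G"
      by blast
    then show "X j \<oplus>\<^bsub>P\<^esub> D j = p"
    proof cases
      case 1
      then show ?thesis
        using j0 Xc Zc D[symmetric] by (auto simp: add_prod mem_carrier_prod PiE_def extensional_def)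
    next
      case 2
      then have "X j = p" "j \<in> J" "D j = \<zero>\<^bsub>P\<^esub>"
        using X(2) dom D0 agrees_withD by blast+
      then show ?thesis
        using Xc by (auto simp: add_prod zero_prod mem_carrier_prod PiE_def extensional_def)
    qed
  qed
  ultimately show "\<exists>X. almost_sol I0 X \<and> agrees_with (insert (j0, Z j0) G) X"
    by blast
qed

lemma fin_solvable_with_extend:
  assumes "countable (carrier R)" "countable B"
    and "Domain G \<subseteq> J" "fin_solvable_with G" "j0 \<in> J" "j0 \<notin> Domain G"
  shows "\<exists>w. fin_solvable_with (insert (j0, w) G)"
proof -
  obtain I' where I': "countable I'" "I' \<subseteq> I"
    and reps: "\<And>I0. finite I0 \<Longrightarrow> I0 \<subseteq> I \<Longrightarrow>
       \<exists>K. finite K \<and> K \<subseteq> I' \<and> row_pattern (Domain G) j0 K = row_pattern (Domain G) j0 I0"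
    using countable_row_pattern_representatives[OF assms(1,5)] by blast
  obtain Z where "almost_sol I' Z" "agrees_with G Z"
    using almost_sol_countable[OF assms(2) I' assms(3,4)] by blast
  then show ?thesis
    using fin_solvable_with_insert[OF assms(3-6) I'(2) _ _ reps] by blast
qed

lemma almost_sol_cong:
  assumes X: "almost_sol I0 X" and "I0 \<subseteq> I" and Y: "\<forall>j\<in>J. Y j \<in> carrier P"
    and eq: "\<And>i j. i \<in> I0 \<Longrightarrow> j \<in> J \<Longrightarrow> r i j \<noteq> \<zero>\<^bsub>R\<^esub> \<Longrightarrow> Y j = X j"
  shows "almost_sol I0 Y"
  unfolding almost_sol_def
proof (intro conjI ballI)
  show "Y j \<in> carrier P" if "j \<in> J" for j
    using Y that by blast
  fix i assume i: "i \<in> I0"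
  have "coord_lc a Y i = coord_lc a X i" if "a \<in> B" for a
    using i that assms by (intro coord_lc_cong) (auto simp: almost_sol_def)
  then have "{a\<in>B. coord_lc a Y i \<noteq> rhs i a} = {a\<in>B. coord_lc a X i \<noteq> rhs i a}"
    by auto
  then show "finite {a\<in>B. coord_lc a Y i \<noteq> rhs i a}"
    using X i by (simp add: almost_sol_def)
qed

lemma Union_chain_functional:
  assumes C: "C \<in> chains {G. Domain G \<subseteq> J \<and> fin_solvable_with G}"
    and "(j, p) \<in> \<Union>C" "(j, q) \<in> \<Union>C"
  shows "p = q"
proof -
  obtain G1 G2 where G: "G1 \<in> C" "G2 \<in> C" "(j, p) \<in> G1" "(j, q) \<in> G2"
    using assms(2,3) by auto
  then have "G1 \<subseteq> G2 \<or> G2 \<subseteq> G1" "fin_solvable_with G1" "fin_solvable_with G2"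
    using C by (auto simp: chains_def chain_subset_def)
  then show ?thesis
    using G fin_solvable_with_functional by blast
qed

lemma fin_solvable_with_Union_chain:
  assumes C: "C \<in> chains {G. Domain G \<subseteq> J \<and> fin_solvable_with G}" "C \<noteq> {}"
  shows "fin_solvable_with (\<Union>C)"
  unfolding fin_solvable_with_def
proof (intro allI impI)
  fix I0 assume I0: "finite I0 \<and> I0 \<subseteq> I"
  have CA: "\<And>G. G \<in> C \<Longrightarrow> fin_solvable_with G"
    using C(1) by (auto simp: chains_def)
  define val where "val j = (THE p. (j, p) \<in> \<Union>C)" for j
  have val: "val j = p" if "(j, p) \<in> \<Union>C" for j p
    unfolding val_def using Union_chain_functional[OF C(1)] that by blast
  define Gf where "Gf = \<Union>C \<inter> (vars I0 \<times> UNIV)"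
  have "Gf \<subseteq> (\<lambda>j. (j, val j)) ` vars I0"
    using val by (force simp: Gf_def)
  then have "finite Gf"
    using finite_vars I0 finite_surj by blast
  then obtain G where G: "G \<in> C" "Gf \<subseteq> G"
    using finite_subset_Union_chain[OF _ _ C(2)] C(1) by (auto simp: Gf_def chains_alt_def)
  obtain X where X: "almost_sol I0 X" "agrees_with G X"
    using CA[OF G(1)] I0 unfolding fin_solvable_with_def by blast
  define X' where "X' j = (if j \<in> Domain (\<Union>C) then val j else X j)" for j
  have "almost_sol I0 X'"
  proof (rule almost_sol_cong[OF X(1)])
    show "\<forall>j\<in>J. X' j \<in> carrier P"
      using X(1) val CA fin_solvable_with_closed by (fastforce simp: X'_def almost_sol_def)
    fix i j assume "i \<in> I0" "j \<in> J" "r i j \<noteq> \<zero>\<^bsub>R\<^esub>"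
    then have "j \<in> vars I0"
      by (auto simp: vars_def)
    then show "X' j = X j"
      using G(2) X(2) val agrees_withD by (fastforce simp: X'_def Gf_def)
  qed (use I0 in blast)
  moreover have "agrees_with (\<Union>C) X'"
  proof (rule agrees_withI)
    fix j p assume jp: "(j, p) \<in> \<Union>C"
    then have "j \<in> Domain (\<Union>C)"
      by blast
    then show "X' j = p"
      using val[OF jp] by (simp add: X'_def)
  qed
  ultimately show "\<exists>X. almost_sol I0 X \<and> agrees_with (\<Union>C) X"
    by blast
qed

lemma almost_sol_of_total:
  assumes G: "fin_solvable_with G" and dom: "Domain G = J"
  shows "\<exists>X. almost_sol I X"
proof -
  define X where "X j = (THE p. (j, p) \<in> G)" for j
  have X: "X j = p" if "(j, p) \<in> G" for j p
    unfolding X_def using fin_solvable_with_functional[OF G] that by blast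
  have Xc: "\<forall>j\<in>J. X j \<in> carrier P"
    using X dom fin_solvable_with_closed[OF G] by blast
  have "almost_sol {i} X" if i: "i \<in> I" for i
  proof -
    obtain Y where Y: "almost_sol {i} Y" "agrees_with G Y"
      using G i unfolding fin_solvable_with_def by blast
    show ?thesis
      using Y X dom i Xc agrees_withD by (intro almost_sol_cong[OF Y(1)]) blast+
  qed
  then show ?thesis
    using Xc by (auto simp: almost_sol_def)
qed

lemma almost_sol_exists:
  assumes "countable (carrier R)" "countable B" "fin_solvable_with {}"
  shows "\<exists>X. almost_sol I X"
proof -
  define A where "A = {G. Domain G \<subseteq> J \<and> fin_solvable_with G}"
  have "\<Union>C \<in> A" if "C \<in> chains A" for C
    using that assms(3) fin_solvable_with_Union_chain
    by (cases "C = {}") (auto simp: A_def chains_def)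
  then obtain G where GA: "G \<in> A" and max: "\<forall>G'\<in>A. G \<subseteq> G' \<longrightarrow> G' = G"
    using Zorn_Lemma[of A] by blast
  have dom: "Domain G \<subseteq> J" and G: "fin_solvable_with G"
    using GA by (auto simp: A_def)
  have "Domain G = J"
  proof (rule ccontr)
    assume "Domain G \<noteq> J"
    then obtain j0 where j0: "j0 \<in> J" "j0 \<notin> Domain G"
      using dom by auto
    then obtain w where "fin_solvable_with (insert (j0, w) G)"
      using fin_solvable_with_extend[OF assms(1,2) dom G] by blast
    then have "insert (j0, w) G \<in> A"
      using dom j0 by (simp add: A_def)
    then have "insert (j0, w) G = G"
      using max subset_insertI by blast
    then show False
      using j0 by auto
  qed
  then show ?thesis
    using almost_sol_of_total[OF G] by blast
qed

section \<open>Solutions in the quotient\<close>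

lemma fin_class_coord_lc_eq_iff:
  assumes "i \<in> I" "\<forall>j\<in>J. X j \<in> carrier P"
  shows "fin_class (\<lambda>a\<in>B. coord_lc a X i) = fin_class (rhs i)
     \<longleftrightarrow> finite {a\<in>B. coord_lc a X i \<noteq> rhs i a}"
proof -
  have "(\<lambda>a\<in>B. coord_lc a X i) \<in> carrier P"
    using assms coord_lc_closed by (auto simp: mem_carrier_prod)
  moreover have "{a\<in>B. (\<lambda>a\<in>B. coord_lc a X i) a \<noteq> rhs i a} = {a\<in>B. coord_lc a X i \<noteq> rhs i a}"
    by auto
  ultimately show ?thesis
    using fin_class_eq_iff assms(1) rhs_closed by simp
qed

lemma lin_comb_quot:
  assumes "i \<in> I" "\<forall>j\<in>J. X j \<in> carrier P"
  shows "lin_comb R Q r (\<lambda>j. fin_class (X j)) i J = fin_class (\<lambda>a\<in>B. coord_lc a X i)"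
  unfolding lin_comb_def coord_lc_def
  using assms finite_row_support coeff_closed by (intro finsum_quot) auto

lemma sys_solvable_quot_iff:
  assumes m: "\<forall>i\<in>I. m i = fin_class (rhs i)" and "I0 \<subseteq> I"
  shows "sys_solvable R Q I0 J r m \<longleftrightarrow> (\<exists>X. almost_sol I0 X)"
proof
  assume "\<exists>X. almost_sol I0 X"
  then obtain X where X: "almost_sol I0 X"
    by blast
  then have Xc: "\<forall>j\<in>J. X j \<in> carrier P"
    by (simp add: almost_sol_def)
  have "lin_comb R Q r (\<lambda>j. fin_class (X j)) i J = m i" if "i \<in> I0" for i
  proof -
    have "i \<in> I"
      using that assms(2) by blast
    then show ?thesis
      using that X Xc m by (simp add: lin_comb_quot fin_class_coord_lc_eq_iff almost_sol_def)
  qed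
  then show "sys_solvable R Q I0 J r m"
    using Xc unfolding sys_solvable_def
    by (intro exI[of _ "\<lambda>j. fin_class (X j)"]) (auto simp: carrier_quot)
next
  assume "sys_solvable R Q I0 J r m"
  then obtain x where x: "\<forall>j\<in>J. x j \<in> carrier Q" and sol: "\<forall>i\<in>I0. lin_comb R Q r x i J = m i"
    unfolding sys_solvable_def by blast
  obtain X where X: "\<forall>j\<in>J. X j \<in> carrier P \<and> x j = fin_class (X j)"
    using quot_representatives[OF x] by blast
  have Xc: "\<forall>j\<in>J. X j \<in> carrier P"
    using X by blast
  have "finite {a\<in>B. coord_lc a X i \<noteq> rhs i a}" if "i \<in> I0" for i
  proof -
    have i: "i \<in> I"
      using that assms(2) by blast
    have "fin_class (\<lambda>a\<in>B. coord_lc a X i) = lin_comb R Q r (\<lambda>j. fin_class (X j)) i J"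
      using i Xc by (simp add: lin_comb_quot)
    also have "\<dots> = lin_comb R Q r x i J"
      unfolding lin_comb_def using X i coeff_closed
      by (intro abelian_monoid.finsum_cong'[OF quot_abelian_monoid])
        (auto simp: smult_quot carrier_quot smult_prod_closed)
    also have "\<dots> = fin_class (rhs i)"
      using sol m that i by simp
    finally show ?thesis
      using fin_class_coord_lc_eq_iff[OF i Xc] by simp
  qed
  then show "\<exists>X. almost_sol I0 X"
    using Xc by (auto simp: almost_sol_def)
qed

end

theorem proposition1:
  fixes R :: "'r ring" and B :: "'b set" and M :: "'b \<Rightarrow> ('r, 'm) module"
    and I :: "'i set" and J :: "'j set"
  assumes "ring R" and "countable (carrier R)" and "countable B"
    and "\<forall>a\<in>B. left_module R (M a)"
  shows "compact_for R (quot_module (prod_module B M) (dsum_carrier B M)) I J"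
  unfolding compact_for_def
proof (intro allI impI, elim conjE)
  fix r :: "'i \<Rightarrow> 'j \<Rightarrow> 'r" and m
  assume r: "row_finite_system R I J r"
    and m: "\<forall>i\<in>I. m i \<in> carrier (quot_module (prod_module B M) (dsum_carrier B M))"
    and fin: "\<forall>I0. finite I0 \<and> I0 \<subseteq> I \<longrightarrow>
      sys_solvable R (quot_module (prod_module B M) (dsum_carrier B M)) I0 J r m"
  interpret module_family R B M
    using assms(4) by unfold_locales
  obtain rhs where rhs: "\<forall>i\<in>I. rhs i \<in> carrier P \<and> m i = fin_class (rhs i)"
    using quot_representatives[OF m] by blast
  interpret quot_system R B M I J r rhs
    using r rhs by unfold_locales auto
  have "fin_solvable_with {}"
    using fin rhs sys_solvable_quot_iff by (auto simp: fin_solvable_with_def agrees_with_def)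
  then obtain X where "almost_sol I X"
    using almost_sol_exists assms(2,3) by blast
  then show "sys_solvable R Q I J r m"
    using rhs sys_solvable_quot_iff by blast
qed

end
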